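(* The normalizer of $\operatorname{IET}^{+}$ in $\operatorname{IET}^{\bowtie}$ is $\operatorname{IET}^{\pm}$.
   Context: $X=[0,1[$. $\widehat{\operatorname{IET}^{\bowtie}}$ is the group of bijections $f:X\to X$ for which there is a finite partition of $X$ into intervals $[a,b[$ such that on each $]a,b[$, $f$ has the form $x\mapsto x+c$ or $x\mapsto -x+c$; $\widehat{\operatorname{IET}^{+}}$ is the subgroup of those for which only the form $x\mapsto x+c$ occurs. With ${\mathfrak S}_{\mathrm{fin}}$ the normal subgroup of finitely supported permutations, $\operatorname{IET}^{\bowtie}=\widehat{\operatorname{IET}^{\bowtie}}/{\mathfrak S}_{\mathrm{fin}}$ and $\operatorname{IET}^{+}=\widehat{\operatorname{IET}^{+}}/{\mathfrak S}_{\mathrm{fin}}$. Let $\mathcal R\in\operatorname{IET}^{\bowtie}$ be the class of any bijection of $X$ agreeing with $x\mapsto 1-x$ outside a finite set. Define $\operatorname{IET}^{-}=\mathcal R\cdot\operatorname{IET}^{+}$ and $\operatorname{IET}^{\pm}=\operatorname{IET}^{+}\cup\operatorname{IET}^{-}$ (a subgroup). *)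

theory Defs
  imports "HOL-Analysis.Analysis" "HOL-Algebra.Group_Action"
begin

definition IET_X :: "real set" where
  "IET_X = {0..<1}"

definition piecewise_isom :: "bool \<Rightarrow> (real \<Rightarrow> real) \<Rightarrow> bool" where
  "piecewise_isom flips f \<longleftrightarrow>
     (\<exists>(n::nat) (a::nat \<Rightarrow> real). a 0 = 0 \<and> a n = 1 \<and> (\<forall>i<n. a i < a (Suc i)) \<and>
        (\<forall>i<n. \<exists>c. (\<forall>x\<in>{a i<..<a (Suc i)}. f x = x + c) \<or>
                     (flips \<and> (\<forall>x\<in>{a i<..<a (Suc i)}. f x = - x + c))))"

text \<open>Bijections of X, encoded as functions on the reals that are the identity outside X.\<close>
definition bij_X :: "(real \<Rightarrow> real) set" where
  "bij_X = {f. bij_betw f IET_X IET_X \<and> (\<forall>x. x \<notin> IET_X \<longrightarrow> f x = x)}"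

definition IET_hat_bowtie :: "(real \<Rightarrow> real) monoid" where
  "IET_hat_bowtie = \<lparr>carrier = {f \<in> bij_X. piecewise_isom True f}, mult = (\<circ>), one = id\<rparr>"

definition IET_hat_plus :: "(real \<Rightarrow> real) set" where
  "IET_hat_plus = {f \<in> bij_X. piecewise_isom False f}"

definition S_fin :: "(real \<Rightarrow> real) set" where
  "S_fin = {f \<in> bij_X. finite {x. f x \<noteq> x}}"

definition IET_bowtie :: "(real \<Rightarrow> real) set monoid" where
  "IET_bowtie = IET_hat_bowtie Mod S_fin"

definition IET_plus :: "(real \<Rightarrow> real) set set" where
  "IET_plus = (\<lambda>f. S_fin #>\<^bsub>IET_hat_bowtie\<^esub> f) ` IET_hat_plus"

text \<open>A bijection of X agreeing with x |-> 1 - x outside the finite set {0}.\<close>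
definition rho_X :: "real \<Rightarrow> real" where
  "rho_X x = (if 0 < x \<and> x < 1 then 1 - x else x)"

definition IET_R :: "(real \<Rightarrow> real) set" where
  "IET_R = S_fin #>\<^bsub>IET_hat_bowtie\<^esub> rho_X"

definition IET_minus :: "(real \<Rightarrow> real) set set" where
  "IET_minus = (\<lambda>k. IET_R \<otimes>\<^bsub>IET_bowtie\<^esub> k) ` IET_plus"

definition IET_pm :: "(real \<Rightarrow> real) set set" where
  "IET_pm = IET_plus \<union> IET_minus"

end

theory Submission
  imports Defs
begin

(* An element of hat IET^bowtie is a bijection of [0,1[ that, off finitely many
  breakpoints, is locally x |-> x + c or x |-> -x + c; such maps are closed under composition and
  inversion, and the finitely supported permutations lie in hat IET^+.  Hence the normalizer of
  IET^+ = hat IET^+ / S_fin in the quotient is the image of the normalizer of hat IET^+ in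
  hat IET^bowtie, and it suffices to show that the latter is hat IET^+ \<union> R hat IET^+.  The
  reflection R normalizes hat IET^+.  Conversely, if neither f nor R f lies in hat IET^+, then f
  reverses some interval I and translates some interval I'.  The images f(I) and f(I') are disjoint,
  so there is an h in hat IET^+ exchanging small subintervals of them, and f^-1 h f then reverses a
  subinterval of I: it is not in hat IET^+, so f does not normalize hat IET^+. *)

section \<open>Normalizers and quotient groups\<close>

lemma (in group) normalizer_iff:
  assumes "H \<subseteq> carrier G"
  shows "g \<in> normalizer G H \<longleftrightarrow>
    g \<in> carrier G \<and> (\<forall>h\<in>H. g \<otimes> h \<otimes> inv g \<in> H) \<and> (\<forall>h\<in>H. inv g \<otimes> h \<otimes> g \<in> H)"
proof -
  have "g \<in> normalizer G H \<longleftrightarrow> g \<in> carrier G \<and> (\<lambda>h. g \<otimes> h \<otimes> inv g) ` H = H"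
    unfolding normalizer_def stabilizer_def l_coset_def r_coset_def using assms by auto
  moreover have "(\<lambda>h. g \<otimes> h \<otimes> inv g) ` H = H \<longleftrightarrow>
      (\<forall>h\<in>H. g \<otimes> h \<otimes> inv g \<in> H) \<and> (\<forall>h\<in>H. inv g \<otimes> h \<otimes> g \<in> H)" if g: "g \<in> carrier G"
  proof -
    have cancel: "inv g \<otimes> (g \<otimes> h \<otimes> inv g) \<otimes> g = h" "g \<otimes> (inv g \<otimes> h \<otimes> g) \<otimes> inv g = h"
      if "h \<in> carrier G" for h
      using g that by (simp_all add: m_assoc[symmetric]) (simp_all add: m_assoc)
    show ?thesis
    proof
      assume eq: "(\<lambda>h. g \<otimes> h \<otimes> inv g) ` H = H"
      have "inv g \<otimes> h \<otimes> g \<in> H" if "h \<in> H" for h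
      proof -
        obtain k where "k \<in> H" "h = g \<otimes> k \<otimes> inv g" using eq \<open>h \<in> H\<close> by blast
        then show ?thesis using cancel(1) assms by auto
      qed
      with eq show "(\<forall>h\<in>H. g \<otimes> h \<otimes> inv g \<in> H) \<and> (\<forall>h\<in>H. inv g \<otimes> h \<otimes> g \<in> H)" by blast
    next
      assume closed: "(\<forall>h\<in>H. g \<otimes> h \<otimes> inv g \<in> H) \<and> (\<forall>h\<in>H. inv g \<otimes> h \<otimes> g \<in> H)"
      have "h \<in> (\<lambda>h. g \<otimes> h \<otimes> inv g) ` H" if "h \<in> H" for h
        using closed that cancel(2)[of h] assms by (auto intro!: image_eqI[of _ _ "inv g \<otimes> h \<otimes> g"])
      with closed show "(\<lambda>h. g \<otimes> h \<otimes> inv g) ` H = H" by blast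
    qed
  qed
  ultimately show ?thesis by blast
qed

lemma (in group) subgroup_subset_normalizer:
  assumes "subgroup H G"
  shows "H \<subseteq> normalizer G H"
proof
  interpret H: subgroup H G by fact
  fix h
  assume "h \<in> H"
  then show "h \<in> normalizer G H"
    unfolding normalizer_iff[OF H.subset] by (auto intro!: H.m_closed H.m_inv_closed)
qed

lemma (in normal) rcos_in_rcos_image_iff:
  assumes "subgroup P G" "H \<subseteq> P" "x \<in> carrier G"
  shows "H #> x \<in> (\<lambda>g. H #> g) ` P \<longleftrightarrow> x \<in> P"
proof
  assume "H #> x \<in> (\<lambda>g. H #> g) ` P"
  then obtain p where "p \<in> P" "H #> x = H #> p" by auto
  moreover have "x \<in> H #> x" using rcos_self[OF assms(3) subgroup_axioms] .
  ultimately obtain n where "n \<in> H" "x = n \<otimes> p" unfolding r_coset_def by auto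
  moreover have "n \<in> P" using \<open>n \<in> H\<close> assms(2) by blast
  ultimately show "x \<in> P" using subgroup.m_closed[OF assms(1) _ \<open>p \<in> P\<close>] by simp
qed auto

lemma (in normal) FactGroup_conj_rcos:
  assumes "g \<in> carrier G" "p \<in> carrier G"
  shows "(H #> g) \<otimes>\<^bsub>G Mod H\<^esub> (H #> p) \<otimes>\<^bsub>G Mod H\<^esub> inv\<^bsub>G Mod H\<^esub> (H #> g) = H #> (g \<otimes> p \<otimes> inv g)"
    and "inv\<^bsub>G Mod H\<^esub> (H #> g) \<otimes>\<^bsub>G Mod H\<^esub> (H #> p) \<otimes>\<^bsub>G Mod H\<^esub> (H #> g) = H #> (inv g \<otimes> p \<otimes> g)"
proof -
  have mult_rcos: "(H #> a) \<otimes>\<^bsub>G Mod H\<^esub> (H #> b) = H #> (a \<otimes> b)"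
    if "a \<in> carrier G" "b \<in> carrier G" for a b
    using that by (simp add: FactGroup_def rcos_sum)
  have inv_rcos: "inv\<^bsub>G Mod H\<^esub> (H #> a) = H #> inv a" if "a \<in> carrier G" for a
  proof -
    have "H #> a \<in> carrier (G Mod H)" unfolding FactGroup_def using rcosetsI[OF subset that] by simp
    then show ?thesis using inv_FactGroup rcos_inv[OF that] by simp
  qed
  show "(H #> g) \<otimes>\<^bsub>G Mod H\<^esub> (H #> p) \<otimes>\<^bsub>G Mod H\<^esub> inv\<^bsub>G Mod H\<^esub> (H #> g) = H #> (g \<otimes> p \<otimes> inv g)"
    "inv\<^bsub>G Mod H\<^esub> (H #> g) \<otimes>\<^bsub>G Mod H\<^esub> (H #> p) \<otimes>\<^bsub>G Mod H\<^esub> (H #> g) = H #> (inv g \<otimes> p \<otimes> g)"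
    using assms by (simp_all add: mult_rcos inv_rcos rcos_sum)
qed

lemma (in normal) normalizer_FactGroup:
  assumes "subgroup P G" "H \<subseteq> P"
  shows "normalizer (G Mod H) ((\<lambda>g. H #> g) ` P) = (\<lambda>g. H #> g) ` normalizer G P"
proof -
  interpret P: subgroup P G by fact
  interpret Q: group "G Mod H" by (rule factorgroup_is_group)
  let ?Q = "(\<lambda>g. H #> g) ` P"
  have carrier_Q: "carrier (G Mod H) = (\<lambda>g. H #> g) ` carrier G"
    unfolding FactGroup_def RCOSETS_def by auto
  have Q_carrier: "?Q \<subseteq> carrier (G Mod H)" unfolding carrier_Q using P.subset by blast
  have rcos_normalizes_iff: "H #> g \<in> normalizer (G Mod H) ?Q \<longleftrightarrow> g \<in> normalizer G P"
    if g: "g \<in> carrier G" for g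
  proof -
    have "H #> g \<in> carrier (G Mod H)" unfolding carrier_Q using g by blast
    moreover have
      "(H #> g) \<otimes>\<^bsub>G Mod H\<^esub> (H #> p) \<otimes>\<^bsub>G Mod H\<^esub> inv\<^bsub>G Mod H\<^esub> (H #> g) \<in> ?Q \<longleftrightarrow> g \<otimes> p \<otimes> inv g \<in> P"
      "inv\<^bsub>G Mod H\<^esub> (H #> g) \<otimes>\<^bsub>G Mod H\<^esub> (H #> p) \<otimes>\<^bsub>G Mod H\<^esub> (H #> g) \<in> ?Q \<longleftrightarrow> inv g \<otimes> p \<otimes> g \<in> P"
      if "p \<in> P" for p
      unfolding FactGroup_conj_rcos[OF g P.mem_carrier[OF that]] using g that
      by (simp_all add: rcos_in_rcos_image_iff[OF assms])
    ultimately show ?thesis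
      unfolding Q.normalizer_iff[OF Q_carrier] normalizer_iff[OF P.subset] using g by auto
  qed
  show ?thesis
  proof (intro equalityI subsetI)
    fix X
    assume X: "X \<in> normalizer (G Mod H) ?Q"
    then have "X \<in> carrier (G Mod H)" using Q.normalizer_iff[OF Q_carrier] by blast
    then obtain g where "g \<in> carrier G" "X = H #> g" unfolding carrier_Q by blast
    with X show "X \<in> (\<lambda>g. H #> g) ` normalizer G P" using rcos_normalizes_iff by blast
  next
    fix X
    assume "X \<in> (\<lambda>g. H #> g) ` normalizer G P"
    then obtain g where g: "g \<in> normalizer G P" "X = H #> g" by blast
    then have "g \<in> carrier G" using normalizer_iff[OF P.subset] by blast
    with g show "X \<in> normalizer (G Mod H) ?Q" using rcos_normalizes_iff by blast
  qed
qed


section \<open>Piecewise affine maps of the unit interval\<close>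

definition affine_on :: "real set \<Rightarrow> (real \<Rightarrow> real) \<Rightarrow> real set \<Rightarrow> bool" where
  "affine_on S f I \<longleftrightarrow> (\<exists>\<sigma>\<in>S. \<exists>c. \<forall>x\<in>I. f x = \<sigma> * x + c)"

text \<open>Equivalent to piecewise_isom (see piecewise_isom_iff_piecewise_affine), but phrased with an
  arbitrary finite set of breakpoints instead of a partition, which makes closure under composition
  and inversion straightforward.\<close>
definition piecewise_affine :: "real set \<Rightarrow> (real \<Rightarrow> real) \<Rightarrow> bool" where
  "piecewise_affine S f \<longleftrightarrow> (\<exists>F. finite F \<and>
     (\<forall>u v. 0 \<le> u \<longrightarrow> u < v \<longrightarrow> v \<le> 1 \<longrightarrow> F \<inter> {u<..<v} = {} \<longrightarrow> affine_on S f {u<..<v}))"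

lemma affine_on_subset: "affine_on S f J \<Longrightarrow> I \<subseteq> J \<Longrightarrow> affine_on S f I"
  unfolding affine_on_def by (meson subsetD)

lemma affine_on_mono: "affine_on S f I \<Longrightarrow> S \<subseteq> T \<Longrightarrow> affine_on T f I"
  unfolding affine_on_def by blast

lemma piecewise_affine_mono: "piecewise_affine S f \<Longrightarrow> S \<subseteq> T \<Longrightarrow> piecewise_affine T f"
  unfolding piecewise_affine_def using affine_on_mono by meson

lemma affine_slope_unique:
  fixes \<sigma> \<tau> c d :: real
  assumes "u < v" "\<forall>x\<in>{u<..<v}. \<sigma> * x + c = \<tau> * x + d"
  shows "\<sigma> = \<tau>"
proof -
  define x1 where "x1 = (2 * u + v) / 3"
  define x2 where "x2 = (u + 2 * v) / 3"
  have "x1 \<in> {u<..<v}" "x2 \<in> {u<..<v}" "x1 \<noteq> x2" using assms(1) unfolding x1_def x2_def by auto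
  then have "\<sigma> * x1 + c = \<tau> * x1 + d" "\<sigma> * x2 + c = \<tau> * x2 + d" using assms(2) by auto
  then have "(\<sigma> - \<tau>) * (x1 - x2) = 0" by (simp add: algebra_simps)
  with \<open>x1 \<noteq> x2\<close> show ?thesis by simp
qed

lemma image_translate_greaterThanLessThan:
  fixes c u v :: real
  shows "(\<lambda>x. x + c) ` {u<..<v} = {u + c<..<v + c}"
proof (intro equalityI subsetI)
  fix y
  assume "y \<in> {u + c<..<v + c}"
  then show "y \<in> (\<lambda>x. x + c) ` {u<..<v}" by (intro image_eqI[of _ _ "y - c"]) auto
qed auto

lemma image_reflect_greaterThanLessThan:
  fixes c u v :: real
  shows "(\<lambda>x. c - x) ` {u<..<v} = {c - v<..<c - u}"
proof (intro equalityI subsetI)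
  fix y
  assume "y \<in> {c - v<..<c - u}"
  then show "y \<in> (\<lambda>x. c - x) ` {u<..<v}" by (intro image_eqI[of _ _ "c - y"]) auto
qed auto

lemma affine_on_image_interval:
  assumes "affine_on S f {u<..<v}" "S \<subseteq> {1, -1}" "u < v"
  obtains u' v' where "u' < v'" "f ` {u<..<v} = {u'<..<v'}"
proof -
  obtain \<sigma> c where "\<sigma> \<in> S" and f: "\<forall>x\<in>{u<..<v}. f x = \<sigma> * x + c"
    using assms(1) unfolding affine_on_def by blast
  then have image: "f ` {u<..<v} = (\<lambda>x. \<sigma> * x + c) ` {u<..<v}" by simp
  from \<open>\<sigma> \<in> S\<close> assms(2) consider "\<sigma> = 1" | "\<sigma> = -1" by auto
  then show thesis
  proof cases
    case 1
    then have "f ` {u<..<v} = {u + c<..<v + c}" using image image_translate_greaterThanLessThan by simp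
    with assms(3) show thesis by (intro that) auto
  next
    case 2
    then have "f ` {u<..<v} = {c - v<..<c - u}" using image image_reflect_greaterThanLessThan by simp
    with assms(3) show thesis by (intro that) auto
  qed
qed

lemma affine_on_comp:
  assumes "affine_on S1 f (g ` I)" "affine_on S2 g I" "\<forall>s1\<in>S1. \<forall>s2\<in>S2. s1 * s2 \<in> T"
  shows "affine_on T (f \<circ> g) I"
proof -
  obtain \<sigma>1 c1 where "\<sigma>1 \<in> S1" and f: "\<forall>y\<in>g ` I. f y = \<sigma>1 * y + c1"
    using assms(1) unfolding affine_on_def by blast
  obtain \<sigma>2 c2 where "\<sigma>2 \<in> S2" and g: "\<forall>x\<in>I. g x = \<sigma>2 * x + c2"
    using assms(2) unfolding affine_on_def by blast
  have "\<forall>x\<in>I. (f \<circ> g) x = (\<sigma>1 * \<sigma>2) * x + (\<sigma>1 * c2 + c1)"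
    using f g by (simp add: algebra_simps)
  then show ?thesis
    unfolding affine_on_def using assms(3) \<open>\<sigma>1 \<in> S1\<close> \<open>\<sigma>2 \<in> S2\<close> by blast
qed

lemma affine_on_inverse:
  assumes "affine_on S f I" "S \<subseteq> {1, -1}" "\<forall>x\<in>I. h (f x) = x"
  shows "affine_on S h (f ` I)"
proof -
  obtain \<sigma> c where "\<sigma> \<in> S" and f: "\<forall>x\<in>I. f x = \<sigma> * x + c"
    using assms(1) unfolding affine_on_def by blast
  have "\<sigma> * \<sigma> = 1" using \<open>\<sigma> \<in> S\<close> assms(2) by auto
  then have "\<forall>x\<in>I. h (f x) = \<sigma> * f x + (- \<sigma> * c)"
    using f assms(3) by (simp add: algebra_simps)
  then show ?thesis unfolding affine_on_def using \<open>\<sigma> \<in> S\<close> by blast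
qed

lemma partition_piece_containing:
  fixes a :: "nat \<Rightarrow> real"
  assumes "a 0 \<le> x" "x < a n"
  shows "\<exists>i<n. a i \<le> x \<and> x < a (Suc i)"
  using assms(2)
proof (induction n)
  case 0
  with assms(1) show ?case by simp
next
  case (Suc n)
  show ?case
  proof (cases "x < a n")
    case True
    with Suc.IH show ?thesis using less_SucI by blast
  next
    case False
    with Suc.prems show ?thesis by auto
  qed
qed

lemma partition_open_piece_containing:
  fixes a :: "nat \<Rightarrow> real"
  assumes "a 0 \<le> x" "x < a n" "x \<notin> a ` {..n}"
  shows "\<exists>i<n. x \<in> {a i<..<a (Suc i)}"
proof -
  obtain i where i: "i < n" "a i \<le> x" "x < a (Suc i)"
    using partition_piece_containing[OF assms(1,2)] by blast
  have "a i \<in> a ` {..n}" using i(1) by simp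
  then have "a i \<noteq> x" using assms(3) by blast
  with i show ?thesis by (intro exI[of _ i]) auto
qed

lemma strict_sorted_nth_less_iff:
  fixes xs :: "'a::linorder list"
  assumes "sorted_wrt (<) xs" "i < length xs" "k < length xs"
  shows "xs ! i < xs ! k \<longleftrightarrow> i < k"
proof
  assume less: "xs ! i < xs ! k"
  show "i < k"
  proof (rule ccontr)
    assume "\<not> i < k"
    then have "k < i \<or> k = i" by auto
    then show False using sorted_wrt_nth_less[OF assms(1), of k i] assms(2) less by auto
  qed
qed (use sorted_wrt_nth_less[OF assms(1)] assms(3) in blast)

lemma finite_set_consecutive_enumeration:
  fixes A :: "real set"
  assumes "finite A" "0 \<in> A" "1 \<in> A" "A \<subseteq> {0..1}"
  obtains n a where "a 0 = 0" "a n = 1" "\<forall>i<n. a i < a (Suc i)" "\<forall>i\<le>n. a i \<in> A"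
    "\<forall>i<n. A \<inter> {a i<..<a (Suc i)} = {}"
proof -
  define xs where "xs = sorted_list_of_set A"
  define n where "n = length xs - 1"
  define a where "a i = xs ! i" for i
  have sorted: "sorted_wrt (<) xs" and set_xs: "set xs = A"
    unfolding xs_def using assms(1) by simp_all
  then have n_less: "n < length xs" unfolding n_def using assms(2) by (cases xs) auto
  have a_less_iff: "a i < a k \<longleftrightarrow> i < k" if "i \<le> n" "k \<le> n" for i k
    unfolding a_def using strict_sorted_nth_less_iff[OF sorted] that n_less by simp
  have a_in_A: "a i \<in> A" if "i \<le> n" for i
    unfolding a_def using that n_less set_xs nth_mem by fastforce
  have index_of: "\<exists>k\<le>n. a k = y" if "y \<in> A" for y
  proof -
    have "y \<in> set xs" using that set_xs by simp
    then obtain k where "k < length xs" "xs ! k = y" by (auto simp: in_set_conv_nth)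
    then show ?thesis unfolding a_def n_def by (intro exI[of _ k]) auto
  qed
  have A_01: "0 \<le> y \<and> y \<le> 1" if "y \<in> A" for y using that assms(4) by auto
  obtain k0 where "k0 \<le> n" "a k0 = 0" using index_of assms(2) by blast
  then have "a 0 = 0" using a_less_iff[of 0 k0] A_01[OF a_in_A[of 0]] by (cases k0) auto
  moreover obtain k1 where "k1 \<le> n" "a k1 = 1" using index_of assms(3) by blast
  then have "a n = 1" using a_less_iff[of k1 n] A_01[OF a_in_A[of n]] by fastforce
  moreover have "A \<inter> {a i<..<a (Suc i)} = {}" if "i < n" for i
  proof (rule ccontr)
    assume "A \<inter> {a i<..<a (Suc i)} \<noteq> {}"
    then obtain y where "y \<in> A" "a i < y" "y < a (Suc i)" by auto
    moreover obtain k where "k \<le> n" "a k = y" using index_of \<open>y \<in> A\<close> by blast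
    ultimately show False using a_less_iff[of i k] a_less_iff[of k "Suc i"] that by auto
  qed
  ultimately show thesis using that a_less_iff a_in_A by simp
qed

lemma partition_of_piecewise_affine:
  assumes "piecewise_affine S f"
  obtains n and a :: "nat \<Rightarrow> real" where "a 0 = 0" "a n = 1" "\<forall>i<n. a i < a (Suc i)"
    "\<forall>i<n. affine_on S f {a i<..<a (Suc i)}"
proof -
  obtain F where "finite F" and F: "\<And>u v. 0 \<le> u \<Longrightarrow> u < v \<Longrightarrow> v \<le> 1 \<Longrightarrow> F \<inter> {u<..<v} = {} \<Longrightarrow>
      affine_on S f {u<..<v}"
    using assms unfolding piecewise_affine_def by blast
  define A where "A = {0, 1} \<union> (F \<inter> {0<..<1::real})"
  have "finite A" "0 \<in> A" "1 \<in> A" "A \<subseteq> {0..1}" using \<open>finite F\<close> unfolding A_def by auto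
  then obtain n a where a0: "a 0 = 0" and an: "a n = 1" and mono: "\<forall>i<n. a i < a (Suc i)"
    and in_A: "\<forall>i\<le>n. a i \<in> A" and gaps: "\<forall>i<n. A \<inter> {a i<..<a (Suc i)} = {}"
    by (rule finite_set_consecutive_enumeration)
  have pieces: "\<forall>i<n. affine_on S f {a i<..<a (Suc i)}"
  proof (intro allI impI F)
    fix i
    assume "i < n"
    show "0 \<le> a i" "a (Suc i) \<le> 1" using in_A \<open>A \<subseteq> {0..1}\<close> \<open>i < n\<close> by (simp_all add: subset_iff)
    show "a i < a (Suc i)" using mono \<open>i < n\<close> by simp
    have "F \<inter> {a i<..<a (Suc i)} \<subseteq> A \<inter> {a i<..<a (Suc i)}"
      using \<open>0 \<le> a i\<close> \<open>a (Suc i) \<le> 1\<close> unfolding A_def by auto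
    then show "F \<inter> {a i<..<a (Suc i)} = {}" using gaps \<open>i < n\<close> by blast
  qed
  show thesis by (rule that[OF a0 an mono pieces])
qed

lemma piecewise_affine_of_partition:
  fixes a :: "nat \<Rightarrow> real"
  assumes "a 0 = 0" "a n = 1" "\<forall>i<n. affine_on S f {a i<..<a (Suc i)}"
  shows "piecewise_affine S f"
  unfolding piecewise_affine_def
proof (intro exI[of _ "a ` {..n}"] conjI allI impI)
  fix u v :: real
  assume uv: "0 \<le> u" "u < v" "v \<le> 1" "a ` {..n} \<inter> {u<..<v} = {}"
  obtain i where i: "i < n" "a i \<le> u" "u < a (Suc i)"
    using partition_piece_containing[of a u n] assms(1,2) uv by auto
  have "a (Suc i) \<in> a ` {..n}" using i(1) by simp
  then have "a (Suc i) \<notin> {u<..<v}" using uv(4) by blast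
  then have "{u<..<v} \<subseteq> {a i<..<a (Suc i)}" using i by auto
  then show "affine_on S f {u<..<v}" using assms(3) i(1) affine_on_subset by blast
qed simp

lemma piecewise_isom_iff_piecewise_affine:
  "piecewise_isom flips f \<longleftrightarrow> piecewise_affine (if flips then {1, -1} else {1}) f"
proof -
  have piece_iff: "(\<exists>c. (\<forall>x\<in>I. f x = x + c) \<or> (flips \<and> (\<forall>x\<in>I. f x = - x + c))) \<longleftrightarrow>
      affine_on (if flips then {1, -1} else {1}) f I" for I
    unfolding affine_on_def by auto
  show ?thesis
  proof
    assume "piecewise_isom flips f"
    then show "piecewise_affine (if flips then {1, -1} else {1}) f"
      unfolding piecewise_isom_def piece_iff using piecewise_affine_of_partition by blast
  next
    assume "piecewise_affine (if flips then {1, -1} else {1}) f"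
    then show "piecewise_isom flips f"
      unfolding piecewise_isom_def piece_iff by (elim partition_of_piecewise_affine) blast
  qed
qed

lemma finite_avoiding_subinterval:
  fixes \<alpha> \<beta> :: real
  assumes "finite D" "\<alpha> < \<beta>"
  obtains u v where "\<alpha> \<le> u" "u < v" "v \<le> \<beta>" "D \<inter> {u<..<v} = {}"
proof -
  define m where "m = Min (insert \<beta> {d \<in> D. \<alpha> < d})"
  have "finite (insert \<beta> {d \<in> D. \<alpha> < d})" using assms(1) by simp
  then have "\<alpha> < m" "m \<le> \<beta>" "\<forall>d\<in>D. \<alpha> < d \<longrightarrow> m \<le> d"
    unfolding m_def using assms(2) by auto
  then show thesis using that[of \<alpha> m] by force
qed

lemma piecewise_translation_not_reflection:
  assumes "piecewise_affine {1} q" "0 \<le> u" "u < v" "v \<le> 1"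
  shows "\<not> (\<forall>x\<in>{u<..<v}. q x = - x + c)"
proof
  assume reflect: "\<forall>x\<in>{u<..<v}. q x = - x + c"
  obtain F where "finite F" and F: "\<And>u v. 0 \<le> u \<Longrightarrow> u < v \<Longrightarrow> v \<le> 1 \<Longrightarrow> F \<inter> {u<..<v} = {} \<Longrightarrow>
      affine_on {1} q {u<..<v}"
    using assms(1) unfolding piecewise_affine_def by blast
  obtain u' v' where "u \<le> u'" "u' < v'" "v' \<le> v" "F \<inter> {u'<..<v'} = {}"
    using finite_avoiding_subinterval[OF \<open>finite F\<close> assms(3)] by blast
  then have "affine_on {1} q {u'<..<v'}" by (intro F) (use assms(2,4) in auto)
  then obtain d where "\<forall>x\<in>{u'<..<v'}. q x = 1 * x + d" unfolding affine_on_def by auto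
  with reflect \<open>u \<le> u'\<close> \<open>v' \<le> v\<close> have "\<forall>x\<in>{u'<..<v'}. (-1) * x + c = 1 * x + d" by auto
  then have "(-1::real) = 1" by (rule affine_slope_unique[OF \<open>u' < v'\<close>])
  then show False by simp
qed

lemma piecewise_affine_piece_with_slope:
  assumes "piecewise_affine {\<sigma>, -\<sigma>} f" "\<not> piecewise_affine {-\<sigma>} f"
  obtains u v c where "0 \<le> u" "u < v" "v \<le> 1" "\<forall>x\<in>{u<..<v}. f x = \<sigma> * x + c"
proof -
  obtain F where "finite F" and F: "\<And>u v. 0 \<le> u \<Longrightarrow> u < v \<Longrightarrow> v \<le> 1 \<Longrightarrow> F \<inter> {u<..<v} = {} \<Longrightarrow>
      affine_on {\<sigma>, -\<sigma>} f {u<..<v}"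
    using assms(1) unfolding piecewise_affine_def by blast
  note piece = that
  show thesis
  proof (rule ccontr)
    assume no_piece: "\<not> thesis"
    have "affine_on {-\<sigma>} f {u<..<v}"
      if uv: "0 \<le> u" "u < v" "v \<le> 1" "F \<inter> {u<..<v} = {}" for u v
    proof -
      obtain \<tau> c where "\<tau> \<in> {\<sigma>, -\<sigma>}" and f: "\<forall>x\<in>{u<..<v}. f x = \<tau> * x + c"
        using F[OF uv] unfolding affine_on_def by blast
      moreover have "\<tau> \<noteq> \<sigma>"
      proof
        assume "\<tau> = \<sigma>"
        with f have "\<forall>x\<in>{u<..<v}. f x = \<sigma> * x + c" by simp
        with piece[OF uv(1-3)] no_piece show False by blast
      qed
      ultimately have "\<tau> = -\<sigma>" by simp
      with f show ?thesis unfolding affine_on_def by blast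
    qed
    with \<open>finite F\<close> have "piecewise_affine {-\<sigma>} f" unfolding piecewise_affine_def by blast
    with assms(2) show False ..
  qed
qed


lemma mem_IET_X: "x \<in> IET_X \<longleftrightarrow> 0 \<le> x \<and> x < 1"
  unfolding IET_X_def by simp

definition inv_X :: "(real \<Rightarrow> real) \<Rightarrow> real \<Rightarrow> real" where
  "inv_X f y = (if y \<in> IET_X then inv_into IET_X f y else y)"

lemma bij_XD:
  assumes "f \<in> bij_X"
  shows "inj_on f IET_X" "f ` IET_X = IET_X" "x \<notin> IET_X \<Longrightarrow> f x = x"
  using assms unfolding bij_X_def bij_betw_def by auto

lemma inv_X_left:
  assumes "f \<in> bij_X"
  shows "inv_X f (f x) = x"
proof (cases "x \<in> IET_X")
  case True
  then have "f x \<in> IET_X" using bij_XD(2)[OF assms] by blast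
  then show ?thesis unfolding inv_X_def using inv_into_f_f[OF bij_XD(1)[OF assms] True] by simp
next
  case False
  then show ?thesis unfolding inv_X_def using bij_XD(3)[OF assms] by simp
qed

lemma inv_X_right:
  assumes "f \<in> bij_X"
  shows "f (inv_X f y) = y"
proof (cases "y \<in> IET_X")
  case True
  then show ?thesis unfolding inv_X_def using f_inv_into_f[of y f IET_X] bij_XD(2)[OF assms] by simp
next
  case False
  then show ?thesis unfolding inv_X_def using bij_XD(3)[OF assms] by simp
qed

lemma inv_X_bij_X:
  assumes "f \<in> bij_X"
  shows "inv_X f \<in> bij_X"
proof -
  have "inv_X f ` IET_X \<subseteq> IET_X"
    unfolding inv_X_def using inv_into_into[of _ f IET_X] bij_XD(2)[OF assms] by auto
  then have "bij_betw (inv_X f) IET_X IET_X"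
    using bij_XD(2)[OF assms] inv_X_left[OF assms] inv_X_right[OF assms]
    by (intro bij_betw_byWitness[of _ f]) auto
  then show ?thesis unfolding bij_X_def inv_X_def by simp
qed

lemma inv_X_fixes_iff:
  assumes "f \<in> bij_X"
  shows "inv_X f y = y \<longleftrightarrow> f y = y"
  using inv_X_left[OF assms, of y] inv_X_right[OF assms, of y] by metis

lemma id_bij_X: "id \<in> bij_X"
  unfolding bij_X_def by simp

lemma comp_bij_X:
  assumes "f \<in> bij_X" "g \<in> bij_X"
  shows "f \<circ> g \<in> bij_X"
proof -
  have "bij_betw (f \<circ> g) IET_X IET_X" using assms unfolding bij_X_def by (blast intro: bij_betw_trans)
  moreover have "(f \<circ> g) x = x" if "x \<notin> IET_X" for x
    using that bij_XD(3)[OF assms(1)] bij_XD(3)[OF assms(2)] by simp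
  ultimately show ?thesis unfolding bij_X_def by blast
qed

lemma piecewise_affine_comp:
  assumes f: "piecewise_affine S1 f" and g: "piecewise_affine S2 g" "S2 \<subseteq> {1, -1}" "g \<in> bij_X"
    and T: "\<forall>s1\<in>S1. \<forall>s2\<in>S2. s1 * s2 \<in> T"
  shows "piecewise_affine T (f \<circ> g)"
proof -
  obtain Ff where "finite Ff" and Ff: "\<And>u v. 0 \<le> u \<Longrightarrow> u < v \<Longrightarrow> v \<le> 1 \<Longrightarrow> Ff \<inter> {u<..<v} = {} \<Longrightarrow>
      affine_on S1 f {u<..<v}"
    using f unfolding piecewise_affine_def by blast
  obtain Fg where "finite Fg" and Fg: "\<And>u v. 0 \<le> u \<Longrightarrow> u < v \<Longrightarrow> v \<le> 1 \<Longrightarrow> Fg \<inter> {u<..<v} = {} \<Longrightarrow>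
      affine_on S2 g {u<..<v}"
    using g(1) unfolding piecewise_affine_def by blast
  define F where "F = Fg \<union> (g -` Ff \<inter> IET_X)"
  have "finite F"
    unfolding F_def using \<open>finite Fg\<close> finite_vimage_IntI[OF \<open>finite Ff\<close> bij_XD(1)[OF g(3)]] by simp
  moreover have "affine_on T (f \<circ> g) {u<..<v}"
    if uv: "0 \<le> u" "u < v" "v \<le> 1" "F \<inter> {u<..<v} = {}" for u v
  proof -
    have g_uv: "affine_on S2 g {u<..<v}" using Fg uv unfolding F_def by blast
    then obtain u' v' where "u' < v'" and image: "g ` {u<..<v} = {u'<..<v'}"
      using affine_on_image_interval g(2) uv(2) by blast
    have "{u<..<v} \<subseteq> IET_X" using uv unfolding IET_X_def by auto
    then have "{u'<..<v'} \<subseteq> IET_X" using bij_XD(2)[OF g(3)] image by blast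
    then have "0 \<le> u'" "v' \<le> 1"
      using \<open>u' < v'\<close> greaterThanLessThan_subseteq_atLeastLessThan_iff[of u' v' 0 1]
      unfolding IET_X_def by simp_all
    moreover have "Ff \<inter> {u'<..<v'} = {}"
      using uv(4) \<open>{u<..<v} \<subseteq> IET_X\<close> unfolding F_def image[symmetric] by blast
    ultimately have "affine_on S1 f (g ` {u<..<v})" using Ff \<open>u' < v'\<close> image by simp
    then show ?thesis using affine_on_comp g_uv T by blast
  qed
  ultimately show ?thesis unfolding piecewise_affine_def by blast
qed

lemma interval_subset_of_overlap:
  fixes u v u' v' y :: real
  assumes "y \<in> {u<..<v}" "y \<in> {u'<..<v'}" "u' \<notin> {u<..<v}" "v' \<notin> {u<..<v}"
  shows "{u<..<v} \<subseteq> {u'<..<v'}"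
  using assms by auto

lemma piecewise_affine_inv_X:
  assumes f: "f \<in> bij_X" "piecewise_affine S f" and S: "S \<subseteq> {1, -1}"
  shows "piecewise_affine S (inv_X f)"
proof -
  obtain n a where a0: "a 0 = 0" and an: "a n = 1" and mono: "\<forall>i<n. a i < a (Suc i)"
    and pieces: "\<forall>i<n. affine_on S f {a i<..<a (Suc i)}"
    by (rule partition_of_piecewise_affine[OF f(2)])
  define J where "J i = f ` {a i<..<a (Suc i)}" for i
  \<comment> \<open>breakpoints of the inverse: images of the partition points and endpoints of the image pieces\<close>
  define F where "F = f ` a ` {..n} \<union> (\<lambda>i. Inf (J i)) ` {..<n} \<union> (\<lambda>i. Sup (J i)) ` {..<n}"
  have "finite F" unfolding F_def by simp
  moreover have "affine_on S (inv_X f) {u<..<v}"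
    if uv: "0 \<le> u" "u < v" "v \<le> 1" "F \<inter> {u<..<v} = {}" for u v
  proof -
    define y0 where "y0 = (u + v) / 2"
    define x0 where "x0 = inv_X f y0"
    have y0: "y0 \<in> {u<..<v}" "y0 \<in> IET_X" unfolding y0_def mem_IET_X using uv by auto
    then have "x0 \<in> IET_X" unfolding x0_def using bij_XD(2)[OF inv_X_bij_X[OF f(1)]] by blast
    have "f x0 = y0" unfolding x0_def using inv_X_right[OF f(1)] .
    have "x0 \<notin> a ` {..n}"
    proof
      assume "x0 \<in> a ` {..n}"
      then have "y0 \<in> F" unfolding F_def using \<open>f x0 = y0\<close> by auto
      with uv(4) y0(1) show False by blast
    qed
    then obtain i where "i < n" "x0 \<in> {a i<..<a (Suc i)}"
      using partition_open_piece_containing[of a x0 n] a0 an \<open>x0 \<in> IET_X\<close> unfolding mem_IET_X by auto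
    then have "y0 \<in> J i" unfolding J_def using \<open>f x0 = y0\<close> by auto
    have "affine_on S f {a i<..<a (Suc i)}" "a i < a (Suc i)" using pieces mono \<open>i < n\<close> by simp_all
    then obtain u' v' where "u' < v'" and J_i: "J i = {u'<..<v'}"
      unfolding J_def using affine_on_image_interval[OF _ S] by metis
    have "Inf (J i) \<in> F" "Sup (J i) \<in> F" unfolding F_def using \<open>i < n\<close> by blast+
    then have "u' \<notin> {u<..<v}" "v' \<notin> {u<..<v}" using uv(4) J_i \<open>u' < v'\<close> by auto
    then have "{u<..<v} \<subseteq> J i"
      using interval_subset_of_overlap[OF y0(1)] \<open>y0 \<in> J i\<close> unfolding J_i by blast
    moreover have "affine_on S (inv_X f) (J i)"
      unfolding J_def using affine_on_inverse pieces \<open>i < n\<close> S inv_X_left[OF f(1)] by blast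
    ultimately show ?thesis using affine_on_subset by blast
  qed
  ultimately show ?thesis unfolding piecewise_affine_def by blast
qed

lemma carrier_IET_hat_bowtie: "carrier IET_hat_bowtie = {f \<in> bij_X. piecewise_affine {1, -1} f}"
  unfolding IET_hat_bowtie_def by (simp add: piecewise_isom_iff_piecewise_affine)

lemma IET_hat_plus_altdef: "IET_hat_plus = {f \<in> bij_X. piecewise_affine {1} f}"
  unfolding IET_hat_plus_def by (simp add: piecewise_isom_iff_piecewise_affine)

lemma mult_IET_hat_bowtie [simp]: "f \<otimes>\<^bsub>IET_hat_bowtie\<^esub> g = f \<circ> g"
  unfolding IET_hat_bowtie_def by simp

lemma one_IET_hat_bowtie [simp]: "\<one>\<^bsub>IET_hat_bowtie\<^esub> = id"
  unfolding IET_hat_bowtie_def by simp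

lemma piecewise_affine_id: "piecewise_affine {1} id"
  unfolding piecewise_affine_def affine_on_def by (intro exI[of _ "{}"]) auto

lemma IET_hat_plus_subset_carrier: "IET_hat_plus \<subseteq> carrier IET_hat_bowtie"
  unfolding IET_hat_plus_altdef carrier_IET_hat_bowtie using piecewise_affine_mono by blast

lemma inv_X_in_carrier: "f \<in> carrier IET_hat_bowtie \<Longrightarrow> inv_X f \<in> carrier IET_hat_bowtie"
  unfolding carrier_IET_hat_bowtie using inv_X_bij_X piecewise_affine_inv_X by blast

lemma inv_X_comp_left: "f \<in> carrier IET_hat_bowtie \<Longrightarrow> inv_X f \<circ> f = id"
  unfolding carrier_IET_hat_bowtie using inv_X_left by (auto simp: fun_eq_iff)

lemma group_IET_hat_bowtie: "group IET_hat_bowtie"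
proof (rule groupI)
  fix f g
  assume "f \<in> carrier IET_hat_bowtie" "g \<in> carrier IET_hat_bowtie"
  then show "f \<otimes>\<^bsub>IET_hat_bowtie\<^esub> g \<in> carrier IET_hat_bowtie"
    unfolding carrier_IET_hat_bowtie using piecewise_affine_comp[of "{1, -1}" f "{1, -1}" g]
    by (auto intro: comp_bij_X)
next
  show "\<one>\<^bsub>IET_hat_bowtie\<^esub> \<in> carrier IET_hat_bowtie"
    using IET_hat_plus_subset_carrier id_bij_X piecewise_affine_id unfolding IET_hat_plus_altdef by auto
next
  fix f
  assume "f \<in> carrier IET_hat_bowtie"
  then show "\<exists>g\<in>carrier IET_hat_bowtie. g \<otimes>\<^bsub>IET_hat_bowtie\<^esub> f = \<one>\<^bsub>IET_hat_bowtie\<^esub>"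
    using inv_X_in_carrier inv_X_comp_left by auto
qed (auto simp: o_assoc)

lemma inv_IET_hat_bowtie:
  assumes "f \<in> carrier IET_hat_bowtie"
  shows "inv\<^bsub>IET_hat_bowtie\<^esub> f = inv_X f"
  using group.inv_equality[OF group_IET_hat_bowtie _ assms inv_X_in_carrier[OF assms]]
    inv_X_comp_left[OF assms] by simp

lemma subgroup_IET_hat_plus: "subgroup IET_hat_plus IET_hat_bowtie"
proof (rule group.subgroupI[OF group_IET_hat_bowtie IET_hat_plus_subset_carrier])
  show "IET_hat_plus \<noteq> {}" unfolding IET_hat_plus_altdef using id_bij_X piecewise_affine_id by blast
next
  fix p
  assume p: "p \<in> IET_hat_plus"
  then show "inv\<^bsub>IET_hat_bowtie\<^esub> p \<in> IET_hat_plus"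
    using inv_IET_hat_bowtie IET_hat_plus_subset_carrier inv_X_bij_X piecewise_affine_inv_X[of p "{1}"]
    unfolding IET_hat_plus_altdef by auto
next
  fix p q
  assume "p \<in> IET_hat_plus" "q \<in> IET_hat_plus"
  then show "p \<otimes>\<^bsub>IET_hat_bowtie\<^esub> q \<in> IET_hat_plus"
    unfolding IET_hat_plus_altdef using piecewise_affine_comp[of "{1}" p "{1}" q]
    by (auto intro: comp_bij_X)
qed

lemma finite_support_conj:
  assumes "g \<in> bij_X" "finite {x. h x \<noteq> x}"
  shows "finite {x. (g \<circ> h \<circ> inv_X g) x \<noteq> x}"
proof -
  have "{x. (g \<circ> h \<circ> inv_X g) x \<noteq> x} \<subseteq> g ` {x. h x \<noteq> x}"
  proof
    fix y
    assume "y \<in> {x. (g \<circ> h \<circ> inv_X g) x \<noteq> x}"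
    then have "h (inv_X g y) \<noteq> inv_X g y" using inv_X_right[OF assms(1), of y] by auto
    moreover have "y = g (inv_X g y)" using inv_X_right[OF assms(1)] by simp
    ultimately show "y \<in> g ` {x. h x \<noteq> x}" by blast
  qed
  then show ?thesis using assms(2) finite_surj by blast
qed

lemma piecewise_affine_finite_support:
  assumes "finite {x. f x \<noteq> x}"
  shows "piecewise_affine {1} f"
  unfolding piecewise_affine_def
proof (intro exI[of _ "{x. f x \<noteq> x}"] conjI allI impI)
  fix u v :: real
  assume "{x. f x \<noteq> x} \<inter> {u<..<v} = {}"
  then have "\<forall>x\<in>{u<..<v}. f x = 1 * x + 0" by auto
  then show "affine_on {1} f {u<..<v}" unfolding affine_on_def by blast
qed (rule assms)

lemma S_fin_subset_IET_hat_plus: "S_fin \<subseteq> IET_hat_plus"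
  unfolding S_fin_def IET_hat_plus_altdef using piecewise_affine_finite_support by blast

lemma normal_S_fin: "S_fin \<lhd> IET_hat_bowtie"
proof -
  interpret group IET_hat_bowtie by (rule group_IET_hat_bowtie)
  have S_fin_carrier: "S_fin \<subseteq> carrier IET_hat_bowtie"
    using S_fin_subset_IET_hat_plus IET_hat_plus_subset_carrier by blast
  have "subgroup S_fin IET_hat_bowtie"
  proof (rule subgroupI[OF S_fin_carrier])
    show "S_fin \<noteq> {}" unfolding S_fin_def using id_bij_X by auto
  next
    fix f
    assume f: "f \<in> S_fin"
    then have "f \<in> bij_X" unfolding S_fin_def by simp
    then have "{x. inv_X f x \<noteq> x} = {x. f x \<noteq> x}" using inv_X_fixes_iff by blast
    with f S_fin_carrier show "inv\<^bsub>IET_hat_bowtie\<^esub> f \<in> S_fin"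
      unfolding S_fin_def by (auto simp: inv_IET_hat_bowtie inv_X_bij_X)
  next
    fix f g
    assume "f \<in> S_fin" "g \<in> S_fin"
    moreover have "{x. (f \<circ> g) x \<noteq> x} \<subseteq> {x. f x \<noteq> x} \<union> {x. g x \<noteq> x}" by auto
    ultimately show "f \<otimes>\<^bsub>IET_hat_bowtie\<^esub> g \<in> S_fin"
      unfolding S_fin_def by (auto intro: comp_bij_X finite_subset)
  qed
  moreover have "g \<otimes>\<^bsub>IET_hat_bowtie\<^esub> h \<otimes>\<^bsub>IET_hat_bowtie\<^esub> inv\<^bsub>IET_hat_bowtie\<^esub> g \<in> S_fin"
    if "g \<in> carrier IET_hat_bowtie" "h \<in> S_fin" for g h
  proof -
    have "g \<in> bij_X" "h \<in> bij_X" "finite {x. h x \<noteq> x}"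
      using that unfolding carrier_IET_hat_bowtie S_fin_def by auto
    then show ?thesis
      unfolding S_fin_def inv_IET_hat_bowtie[OF that(1)]
      using finite_support_conj comp_bij_X inv_X_bij_X by auto
  qed
  ultimately show ?thesis by (simp add: normal_inv_iff)
qed

lemma rho_X_rho_X [simp]: "rho_X (rho_X x) = x"
  unfolding rho_X_def by auto

lemma rho_X_bij_X: "rho_X \<in> bij_X"
proof -
  have "bij_betw rho_X IET_X IET_X"
    by (rule bij_betw_byWitness[of _ rho_X]) (auto simp: rho_X_def IET_X_def)
  then show ?thesis unfolding bij_X_def rho_X_def IET_X_def by auto
qed

lemma piecewise_affine_rho_X: "piecewise_affine {-1} rho_X"
  unfolding piecewise_affine_def
proof (intro exI[of _ "{}"] conjI allI impI)
  fix u v :: real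
  assume "0 \<le> u" "v \<le> 1"
  then have "\<forall>x\<in>{u<..<v}. rho_X x = -1 * x + 1" unfolding rho_X_def by auto
  then show "affine_on {-1} rho_X {u<..<v}" unfolding affine_on_def by blast
qed simp

lemma rho_X_in_carrier: "rho_X \<in> carrier IET_hat_bowtie"
  unfolding carrier_IET_hat_bowtie
  using rho_X_bij_X piecewise_affine_mono[OF piecewise_affine_rho_X] by simp

lemma rho_X_comp_in_IET_hat_plus:
  assumes "f \<in> bij_X" "piecewise_affine {-1} f"
  shows "rho_X \<circ> f \<in> IET_hat_plus"
  unfolding IET_hat_plus_altdef
  using comp_bij_X[OF rho_X_bij_X assms(1)] piecewise_affine_comp[OF piecewise_affine_rho_X assms(2)]
  by (simp add: assms(1))

lemma rho_X_conj_in_IET_hat_plus: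
  assumes "p \<in> IET_hat_plus"
  shows "rho_X \<circ> p \<circ> rho_X \<in> IET_hat_plus"
proof -
  have p: "p \<in> bij_X" "piecewise_affine {1} p" using assms unfolding IET_hat_plus_altdef by auto
  have "piecewise_affine {-1} (p \<circ> rho_X)"
    using piecewise_affine_comp[OF p(2) piecewise_affine_rho_X _ rho_X_bij_X] by simp
  then show ?thesis
    using rho_X_comp_in_IET_hat_plus[OF comp_bij_X[OF p(1) rho_X_bij_X]] by (simp add: o_assoc)
qed

section \<open>Elements outside the normalizer\<close>

definition interval_swap :: "real \<Rightarrow> real \<Rightarrow> real \<Rightarrow> real \<Rightarrow> real" where
  "interval_swap s t \<epsilon> y =
     (if y \<in> {s..<s + \<epsilon>} then y + (t - s) else if y \<in> {t..<t + \<epsilon>} then y - (t - s) else y)"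

lemma interval_swap_cases:
  "interval_swap s t \<epsilon> y \<in> {t..<t + \<epsilon>} \<and> y \<in> {s..<s + \<epsilon>} \<or>
   interval_swap s t \<epsilon> y \<in> {s..<s + \<epsilon>} \<and> y \<in> {t..<t + \<epsilon>} \<or>
   interval_swap s t \<epsilon> y = y"
  unfolding interval_swap_def by auto

lemma interval_swap_involution:
  assumes "s + \<epsilon> \<le> t \<or> t + \<epsilon> \<le> s"
  shows "interval_swap s t \<epsilon> (interval_swap s t \<epsilon> y) = y"
proof -
  consider "y \<in> {s..<s + \<epsilon>}" | "y \<notin> {s..<s + \<epsilon>}" "y \<in> {t..<t + \<epsilon>}"
    | "y \<notin> {s..<s + \<epsilon>}" "y \<notin> {t..<t + \<epsilon>}" by blast
  then show ?thesis
  proof cases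
    case 1
    then have "y + (t - s) \<notin> {s..<s + \<epsilon>}" "y + (t - s) \<in> {t..<t + \<epsilon>}" using assms by auto
    with 1 show ?thesis unfolding interval_swap_def by auto
  next
    case 2
    then have "y - (t - s) \<in> {s..<s + \<epsilon>}" by auto
    with 2 show ?thesis unfolding interval_swap_def by auto
  next
    case 3
    then have "interval_swap s t \<epsilon> y = y" unfolding interval_swap_def by auto
    then show ?thesis by simp
  qed
qed

lemma same_side_in_interval:
  fixes a x y :: real
  assumes "a \<notin> {u<..<v}" "x \<in> {u<..<v}" "y \<in> {u<..<v}"
  shows "a \<le> x \<longleftrightarrow> a \<le> y"
  using assms by auto

lemma interval_swap_in_IET_hat_plus:
  assumes "0 \<le> s" "s + \<epsilon> \<le> 1" "0 \<le> t" "t + \<epsilon> \<le> 1" "s + \<epsilon> \<le> t \<or> t + \<epsilon> \<le> s"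
  shows "interval_swap s t \<epsilon> \<in> IET_hat_plus"
proof -
  let ?h = "interval_swap s t \<epsilon>"
  have "{s..<s + \<epsilon>} \<subseteq> IET_X" "{t..<t + \<epsilon>} \<subseteq> IET_X" using assms(1-4) unfolding IET_X_def by auto
  then have "?h y \<in> IET_X" if "y \<in> IET_X" for y using interval_swap_cases[of s t \<epsilon> y] that by auto
  then have "bij_betw ?h IET_X IET_X"
    using interval_swap_involution[OF assms(5)] by (intro bij_betw_byWitness[of _ ?h]) auto
  moreover have "?h y = y" if "y \<notin> IET_X" for y
    using that \<open>{s..<s + \<epsilon>} \<subseteq> IET_X\<close> \<open>{t..<t + \<epsilon>} \<subseteq> IET_X\<close> unfolding interval_swap_def by auto
  ultimately have "?h \<in> bij_X" unfolding bij_X_def by blast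
  moreover have "piecewise_affine {1} ?h"
    unfolding piecewise_affine_def
  proof (intro exI[of _ "{s, s + \<epsilon>, t, t + \<epsilon>}"] conjI allI impI)
    fix u v :: real
    assume uv: "0 \<le> u" "u < v" "v \<le> 1" "{s, s + \<epsilon>, t, t + \<epsilon>} \<inter> {u<..<v} = {}"
    define m where "m = (u + v) / 2"
    have m: "m \<in> {u<..<v}" unfolding m_def using uv(2) by auto
    have "?h x = 1 * x + (?h m - m)" if x: "x \<in> {u<..<v}" for x
    proof -
      have "s \<notin> {u<..<v}" "s + \<epsilon> \<notin> {u<..<v}" "t \<notin> {u<..<v}" "t + \<epsilon> \<notin> {u<..<v}"
        using uv(4) by auto
      then have "(s \<le> x) = (s \<le> m)" "(s + \<epsilon> \<le> x) = (s + \<epsilon> \<le> m)"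
        "(t \<le> x) = (t \<le> m)" "(t + \<epsilon> \<le> x) = (t + \<epsilon> \<le> m)"
        using same_side_in_interval[OF _ x m] by blast+
      then show ?thesis unfolding interval_swap_def atLeastLessThan_iff not_le[symmetric] by simp
    qed
    then show "affine_on {1} ?h {u<..<v}" unfolding affine_on_def by blast
  qed simp
  ultimately show ?thesis unfolding IET_hat_plus_altdef by blast
qed

lemma bij_X_reflected_translated_images_disjoint:
  assumes f: "f \<in> bij_X"
    and reflect: "{u1<..<v1} \<subseteq> IET_X" "\<forall>x\<in>{u1<..<v1}. f x = - x + c1"
    and translate: "{u2<..<v2} \<subseteq> IET_X" "\<forall>x\<in>{u2<..<v2}. f x = x + c2"
  shows "{c1 - v1<..<c1 - u1} \<inter> {u2 + c2<..<v2 + c2} = {}"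
proof (rule ccontr)
  define lo where "lo = max (c1 - v1) (u2 + c2)"
  define hi where "hi = min (c1 - u1) (v2 + c2)"
  assume "{c1 - v1<..<c1 - u1} \<inter> {u2 + c2<..<v2 + c2} \<noteq> {}"
  then have "lo < hi" unfolding lo_def hi_def by (simp add: not_le)
  \<comment> \<open>on the common part of the two images, f^-1 would be both a reflection and a translation\<close>
  have "(-1) * z + c1 = 1 * z + (- c2)" if "z \<in> {lo<..<hi}" for z
  proof -
    have "c1 - z \<in> {u1<..<v1}" "z - c2 \<in> {u2<..<v2}" using that unfolding lo_def hi_def by auto
    then have "f (c1 - z) = f (z - c2)" "c1 - z \<in> IET_X" "z - c2 \<in> IET_X"
      using reflect translate by auto
    then have "c1 - z = z - c2" using inj_onD[OF bij_XD(1)[OF f]] by blast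
    then show ?thesis by simp
  qed
  then have "(-1::real) = 1" using affine_slope_unique[OF \<open>lo < hi\<close>] by blast
  then show False by simp
qed

lemma swap_conjugate_reflects:
  assumes f: "f \<in> bij_X"
    and reflect: "0 \<le> u1" "u1 < v1" "v1 \<le> 1" "\<forall>x\<in>{u1<..<v1}. f x = - x + c1"
    and translate: "0 \<le> u2" "u2 < v2" "v2 \<le> 1" "\<forall>x\<in>{u2<..<v2}. f x = x + c2"
  obtains h \<alpha> \<beta> c where "h \<in> IET_hat_plus" "0 \<le> \<alpha>" "\<alpha> < \<beta>" "\<beta> \<le> 1"
    "\<forall>x\<in>{\<alpha><..<\<beta>}. inv_X f (h (f x)) = - x + c"
proof -
  have I: "{u1<..<v1} \<subseteq> IET_X" "{u2<..<v2} \<subseteq> IET_X"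
    using reflect(1,3) translate(1,3) unfolding IET_X_def by auto
  have "f ` {u1<..<v1} = (\<lambda>x. c1 - x) ` {u1<..<v1}" "f ` {u2<..<v2} = (\<lambda>x. x + c2) ` {u2<..<v2}"
    using reflect(4) translate(4) by (auto intro: image_cong)
  then have images: "f ` {u1<..<v1} = {c1 - v1<..<c1 - u1}" "f ` {u2<..<v2} = {u2 + c2<..<v2 + c2}"
    by (simp_all add: image_reflect_greaterThanLessThan image_translate_greaterThanLessThan)
  have "f ` {u1<..<v1} \<subseteq> IET_X" "f ` {u2<..<v2} \<subseteq> IET_X" using I bij_XD(2)[OF f] by blast+
  with images have "{c1 - v1<..<c1 - u1} \<subseteq> IET_X" "{u2 + c2<..<v2 + c2} \<subseteq> IET_X" by simp_all
  then have bounds: "0 \<le> c1 - v1" "c1 - u1 \<le> 1" "0 \<le> u2 + c2" "v2 + c2 \<le> 1"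
    using reflect(2) translate(2)
    unfolding IET_X_def by (simp_all add: greaterThanLessThan_subseteq_atLeastLessThan_iff)
  have "c1 - u1 \<le> u2 + c2 \<or> v2 + c2 \<le> c1 - v1"
    using bij_X_reflected_translated_images_disjoint[OF f I(1) reflect(4) I(2) translate(4)]
      reflect(2) translate(2) by (auto simp: min_def max_def split: if_splits)
  \<comment> \<open>h swaps initial segments of the two images, so f^-1 h f reflects ]v1 - \<epsilon>, v1[\<close>
  define \<epsilon> where "\<epsilon> = min (v1 - u1) (v2 - u2)"
  define h where "h = interval_swap (c1 - v1) (u2 + c2) \<epsilon>"
  have "h \<in> IET_hat_plus"
    unfolding h_def
    using bounds \<open>c1 - u1 \<le> u2 + c2 \<or> v2 + c2 \<le> c1 - v1\<close> unfolding \<epsilon>_def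
    by (intro interval_swap_in_IET_hat_plus) auto
  moreover have "inv_X f (h (f x)) = - x + (v1 + u2)" if x: "x \<in> {v1 - \<epsilon><..<v1}" for x
  proof -
    have "x \<in> {u1<..<v1}" using x unfolding \<epsilon>_def by auto
    then have "h (f x) = v1 - x + u2 + c2"
      using reflect(4) x unfolding h_def interval_swap_def by auto
    moreover have "v1 - x + u2 \<in> {u2<..<v2}" using x unfolding \<epsilon>_def by auto
    then have "f (v1 - x + u2) = v1 - x + u2 + c2" using translate(4) by auto
    ultimately show ?thesis using inv_X_left[OF f, of "v1 - x + u2"] by simp
  qed
  moreover have "0 \<le> v1 - \<epsilon>" "v1 - \<epsilon> < v1" unfolding \<epsilon>_def using reflect(1,2) translate(2) by auto
  ultimately show thesis using reflect(3) by (intro that[of h "v1 - \<epsilon>" v1 "v1 + u2"]) auto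
qed

lemma conjugate_not_in_IET_hat_plus:
  assumes f: "f \<in> carrier IET_hat_bowtie" and "f \<notin> IET_hat_plus" "rho_X \<circ> f \<notin> IET_hat_plus"
  shows "\<exists>h\<in>IET_hat_plus. inv\<^bsub>IET_hat_bowtie\<^esub> f \<circ> h \<circ> f \<notin> IET_hat_plus"
proof -
  have f_bij: "f \<in> bij_X" and f_pw: "piecewise_affine {1, -1} f"
    using f unfolding carrier_IET_hat_bowtie by auto
  have "piecewise_affine {-1, - (-1)} f" using f_pw by (simp add: insert_commute)
  moreover have "\<not> piecewise_affine {- (-1)} f" using assms(2) f_bij unfolding IET_hat_plus_altdef by simp
  ultimately obtain u1 v1 c1 where
    reflect: "0 \<le> u1" "u1 < v1" "v1 \<le> 1" "\<forall>x\<in>{u1<..<v1}. f x = -1 * x + c1"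
    by (rule piecewise_affine_piece_with_slope)
  have "\<not> piecewise_affine {-1} f" using assms(3) rho_X_comp_in_IET_hat_plus f_bij by blast
  with f_pw obtain u2 v2 c2 where
    translate: "0 \<le> u2" "u2 < v2" "v2 \<le> 1" "\<forall>x\<in>{u2<..<v2}. f x = 1 * x + c2"
    by (rule piecewise_affine_piece_with_slope)
  have "\<forall>x\<in>{u1<..<v1}. f x = - x + c1" "\<forall>x\<in>{u2<..<v2}. f x = x + c2"
    using reflect(4) translate(4) by simp_all
  then obtain h \<alpha> \<beta> c where h: "h \<in> IET_hat_plus" and "0 \<le> \<alpha>" "\<alpha> < \<beta>" "\<beta> \<le> 1"
    and conj: "\<forall>x\<in>{\<alpha><..<\<beta>}. inv_X f (h (f x)) = - x + c"
    by (rule swap_conjugate_reflects[OF f_bij reflect(1-3) _ translate(1-3)])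
  have "inv_X f \<circ> h \<circ> f \<notin> IET_hat_plus"
    using piecewise_translation_not_reflection[OF _ \<open>0 \<le> \<alpha>\<close> \<open>\<alpha> < \<beta>\<close> \<open>\<beta> \<le> 1\<close>, of "inv_X f \<circ> h \<circ> f" c]
      conj unfolding IET_hat_plus_altdef by auto
  then show ?thesis using h inv_IET_hat_bowtie[OF f] by auto
qed

lemma normalizer_IET_hat_plus:
  "normalizer IET_hat_bowtie IET_hat_plus = IET_hat_plus \<union> (\<lambda>p. rho_X \<circ> p) ` IET_hat_plus"
proof -
  interpret group IET_hat_bowtie by (rule group_IET_hat_bowtie)
  interpret P: subgroup IET_hat_plus IET_hat_bowtie by (rule subgroup_IET_hat_plus)
  let ?N = "normalizer IET_hat_bowtie IET_hat_plus"
  interpret N: subgroup ?N IET_hat_bowtie by (rule normalizer_imp_subgroup[OF P.subset])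
  have "IET_hat_plus \<subseteq> ?N" by (rule subgroup_subset_normalizer[OF subgroup_IET_hat_plus])
  moreover have "rho_X \<in> ?N"
  proof -
    have "inv\<^bsub>IET_hat_bowtie\<^esub> rho_X = rho_X"
      using inv_equality[of rho_X rho_X] rho_X_in_carrier by (simp add: fun_eq_iff)
    then show ?thesis
      using rho_X_in_carrier rho_X_conj_in_IET_hat_plus by (simp add: normalizer_iff[OF P.subset])
  qed
  ultimately have "IET_hat_plus \<union> (\<lambda>p. rho_X \<circ> p) ` IET_hat_plus \<subseteq> ?N"
    using N.m_closed[of rho_X] by auto
  moreover have "?N \<subseteq> IET_hat_plus \<union> (\<lambda>p. rho_X \<circ> p) ` IET_hat_plus"
  proof
    fix f
    assume "f \<in> ?N"
    then have "f \<in> carrier IET_hat_bowtie" "\<forall>h\<in>IET_hat_plus. inv\<^bsub>IET_hat_bowtie\<^esub> f \<circ> h \<circ> f \<in> IET_hat_plus"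
      by (simp_all add: normalizer_iff[OF P.subset])
    then have "f \<in> IET_hat_plus \<or> rho_X \<circ> f \<in> IET_hat_plus"
      using conjugate_not_in_IET_hat_plus by blast
    moreover have "f = rho_X \<circ> (rho_X \<circ> f)" by (simp add: fun_eq_iff)
    ultimately show "f \<in> IET_hat_plus \<union> (\<lambda>p. rho_X \<circ> p) ` IET_hat_plus" by blast
  qed
  ultimately show ?thesis by blast
qed

theorem proposition5p1:
  shows "normalizer IET_bowtie IET_plus = IET_pm"
proof -
  interpret normal S_fin IET_hat_bowtie by (rule normal_S_fin)
  have "IET_minus = (\<lambda>p. S_fin #>\<^bsub>IET_hat_bowtie\<^esub> (rho_X \<circ> p)) ` IET_hat_plus"
    unfolding IET_minus_def IET_plus_def IET_R_def image_image IET_bowtie_def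
    using rcos_sum rho_X_in_carrier IET_hat_plus_subset_carrier by (auto simp: FactGroup_def)
  then have "IET_pm = (\<lambda>g. S_fin #>\<^bsub>IET_hat_bowtie\<^esub> g) ` normalizer IET_hat_bowtie IET_hat_plus"
    unfolding IET_pm_def IET_plus_def normalizer_IET_hat_plus by (simp add: image_Un image_image)
  also have "\<dots> = normalizer IET_bowtie IET_plus"
    unfolding IET_bowtie_def IET_plus_def
    using normalizer_FactGroup[OF subgroup_IET_hat_plus S_fin_subset_IET_hat_plus] by simp
  finally show ?thesis by simp
qed

end
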